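(* Let $\mathbf{x}=(\mathbf{x}_1,\mathbf{x}_2,\mathbf{x}_3)$ have i.i.d. Bernoulli$(0.5)$ coordinates, and let $\mathbf{y}$ be distributed as follows: if $\mathbf{x}_3=1$, $\mathbf{y}=\mathbf{x}_1$ with probability $0.9$ and $\mathbf{y}=1-\mathbf{x}_1$ otherwise; if $\mathbf{x}_3=0$, $\mathbf{y}=\mathbf{x}_2$ with probability $0.9$ and $\mathbf{y}=1-\mathbf{x}_2$ otherwise. Let $e_{\mathrm{encode}}(\mathbf{x})=\xi_1=[1,0,0]$ if $\mathbf{x}_3=1$ and $e_{\mathrm{encode}}(\mathbf{x})=\xi_2=[0,1,0]$ otherwise. Then ROAR and FRESH both assign their respective optimal scores to $e_{\mathrm{encode}}$; that is, $\mathbf{y}$ is independent of $\mathbf{x}_{-e_{\mathrm{encode}}(\mathbf{x})}$, and $q(\mathbf{y}\mid \mathrm{val}(\mathbf{x}_{e_{\mathrm{encode}}(\mathbf{x})}))=q(\mathbf{y}\mid\mathbf{x})$ almost surely.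
   Context: An explanation is a map $e:\{0,1\}^3\to\{0,1\}^3$ selecting coordinates; the explanation $\mathbf{x}_{e(\mathbf{x})}=(\mathbf{v},\mathbf{a})$ consists of the selection $\mathbf{v}=e(\mathbf{x})$ and the values $\mathbf{a}$ of the selected coordinates. $\mathbf{x}_{-e(\mathbf{x})}$ denotes the pair of the complementary mask $\mathbf{1}-e(\mathbf{x})$ and the values of the unselected coordinates. ROAR scores an explanation by how poorly $\mathbf{x}_{-e(\mathbf{x})}$ predicts $\mathbf{y}$, and assigns its optimal score exactly when $\mathbf{y}$ is independent of $\mathbf{x}_{-e(\mathbf{x})}$. $\mathrm{val}(\mathbf{x}_{e(\mathbf{x})})$ is the vector in which the selected values $\mathbf{a}$ are placed in order in the first $\sum_i\mathbf{v}_i$ positions and the remaining positions are filled with a padding token (so the positions of the selected coordinates are dropped). FRESH scores an explanation by how well $\mathrm{val}(\mathbf{x}_{e(\mathbf{x})})$ predicts $\mathbf{y}$, and assigns its optimal score when this prediction is as good as that of $q(\mathbf{y}\mid\mathbf{x})$, i.e. $q(\mathbf{y}\mid\mathrm{val}(\mathbf{x}_{e(\mathbf{x})}))=q(\mathbf{y}\mid\mathbf{x})$. *)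

theory Defs
  imports "HOL-Probability.Probability"
begin

text \<open>Binary values are encoded as bool (True = 1, False = 0).
  Inputs and selection masks live in {0,1}^3, rendered as bool triples.\<close>

type_synonym bvec = "bool \<times> bool \<times> bool"

definition vlist :: "bvec \<Rightarrow> bool list" where
  "vlist v = (case v of (a, b, c) \<Rightarrow> [a, b, c])"

definition mask_compl :: "bvec \<Rightarrow> bvec" where
  "mask_compl v = (case v of (a, b, c) \<Rightarrow> (\<not> a, \<not> b, \<not> c))"

definition selected :: "bvec \<Rightarrow> bvec \<Rightarrow> bool list" where
  "selected v x = map snd (filter fst (zip (vlist v) (vlist x)))"

text \<open>x_{e(x)} = (e(x), selected values)\<close>
definition expl_of :: "(bvec \<Rightarrow> bvec) \<Rightarrow> bvec \<Rightarrow> bvec \<times> bool list" where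
  "expl_of e x = (e x, selected (e x) x)"

text \<open>x_{-e(x)} = (1 - e(x), values of unselected coordinates)\<close>
definition removed :: "(bvec \<Rightarrow> bvec) \<Rightarrow> bvec \<Rightarrow> bvec \<times> bool list" where
  "removed e x = (mask_compl (e x), selected (mask_compl (e x)) x)"

text \<open>val(x_{e(x)}): selected values in the first positions, padding token (None) after.\<close>
definition val_expl :: "(bvec \<Rightarrow> bvec) \<Rightarrow> bvec \<Rightarrow> bool option list" where
  "val_expl e x = (let s = selected (e x) x in map Some s @ replicate (3 - length s) None)"

definition indep_pmf :: "'w pmf \<Rightarrow> ('w \<Rightarrow> 'a) \<Rightarrow> ('w \<Rightarrow> 'b) \<Rightarrow> bool" where
  "indep_pmf D X Y \<longleftrightarrow> (\<forall>a b. measure_pmf.prob D {w. X w = a \<and> Y w = b}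
      = measure_pmf.prob D {w. X w = a} * measure_pmf.prob D {w. Y w = b})"

definition cond_prob :: "'w pmf \<Rightarrow> ('w \<Rightarrow> 'b) \<Rightarrow> 'b \<Rightarrow> ('w \<Rightarrow> 'c) \<Rightarrow> 'c \<Rightarrow> real" where
  "cond_prob D Y b Z z = measure_pmf.prob D {w. Y w = b \<and> Z w = z} / measure_pmf.prob D {w. Z w = z}"

definition ydist :: "bvec \<Rightarrow> bool pmf" where
  "ydist x = (case x of (x1, x2, x3) \<Rightarrow>
     (let t = (if x3 then x1 else x2) in map_pmf (\<lambda>keep. if keep then t else \<not> t) (bernoulli_pmf (9/10))))"

definition data :: "(bvec \<times> bool) pmf" where
  "data = do { x \<leftarrow> pair_pmf (bernoulli_pmf (1/2)) (pair_pmf (bernoulli_pmf (1/2)) (bernoulli_pmf (1/2)));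
               y \<leftarrow> ydist x; return_pmf (x, y) }"

definition e_encode :: "bvec \<Rightarrow> bvec" where
  "e_encode x = (case x of (x1, x2, x3) \<Rightarrow> if x3 then (True, False, False) else (False, True, False))"

definition roar_optimal :: "(bvec \<times> bool) pmf \<Rightarrow> (bvec \<Rightarrow> bvec) \<Rightarrow> bool" where
  "roar_optimal D e \<longleftrightarrow> indep_pmf D snd (\<lambda>(x, y). removed e x)"

definition fresh_optimal :: "(bvec \<times> bool) pmf \<Rightarrow> (bvec \<Rightarrow> bvec) \<Rightarrow> bool" where
  "fresh_optimal D e \<longleftrightarrow> (AE w in measure_pmf D. \<forall>b.
      cond_prob D snd b (\<lambda>(x, y). val_expl e x) (val_expl e (fst w))
    = cond_prob D snd b fst (fst w))"

end

theory Submission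
  imports Defs
begin

text \<open>Write \<open>y\<close> as a noisy copy of the signal bit \<open>s(x)\<close>, which is \<open>x\<^sub>1\<close> if \<open>x\<^sub>3\<close> holds and
  \<open>x\<^sub>2\<close> otherwise. For ROAR, flipping the coordinate that \<open>s\<close> reads leaves \<open>x\<^bsub>-e(x)\<^esub>\<close>
  unchanged (that coordinate is exactly the one \<open>e\<close> selects), preserves the uniform law of \<open>x\<close>
  and negates \<open>s(x)\<close>; combined with negating \<open>y\<close> it is a symmetry of the joint law, so \<open>y\<close> is a
  fair coin given every value of \<open>x\<^bsub>-e(x)\<^esub>\<close>. For FRESH, \<open>val(x\<^bsub>e(x)\<^esub>)\<close> is
  \<open>[s(x), pad, pad]\<close>, and the law of \<open>y\<close> given \<open>x\<close> depends on \<open>x\<close> only through \<open>s(x)\<close>,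
  so conditioning on \<open>val(x\<^bsub>e(x)\<^esub>)\<close> or on \<open>x\<close> yields the same law.\<close>

lemma pmf_bind_map_Pair:
  "pmf (M \<bind> (\<lambda>x. map_pmf (Pair x) (N x))) (x, y) = pmf M x * pmf (N x) y"
proof -
  have "pmf (M \<bind> (\<lambda>x. map_pmf (Pair x) (N x))) (x, y)
      = (\<integral>x'. indicator {x} x' * pmf (N x) y \<partial>measure_pmf M)"
    unfolding pmf_bind
    by (intro Bochner_Integration.integral_cong refl)
      (auto simp: pmf_map_inj' inj_on_def indicator_def pmf_eq_0_set_pmf)
  thus ?thesis by (simp add: measure_pmf_single)
qed

lemma map_pmf_eq_self_if_involution:
  assumes inv: "\<And>w. f (f w) = w" and sym: "\<And>w. pmf M (f w) = pmf M w"
  shows "map_pmf f M = M"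
proof (rule pmf_eqI)
  fix w
  have "inj f" by (metis inv injI)
  have "pmf (map_pmf f M) w = pmf (map_pmf f M) (f (f w))" by (simp add: inv)
  also have "\<dots> = pmf M (f w)" using \<open>inj f\<close> by (rule pmf_map_inj')
  finally show "pmf (map_pmf f M) w = pmf M w" by (simp add: sym)
qed

lemma prob_label_half_if_flip_symmetric:
  fixes D :: "('x \<times> bool) pmf"
  assumes inv: "\<And>x. \<sigma> (\<sigma> x) = x"
    and sym: "\<And>x y. pmf D (\<sigma> x, \<not> y) = pmf D (x, y)"
    and Q_inv: "\<And>x. Q (\<sigma> x) = Q x"
  shows "measure_pmf.prob D {w. snd w = b \<and> Q (fst w)} = measure_pmf.prob D {w. Q (fst w)} / 2"
proof -
  let ?f = "\<lambda>(x, y). (\<sigma> x, \<not> y)"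
  let ?A = "\<lambda>b. {w. snd w = b \<and> Q (fst w)}"
  have "map_pmf ?f D = D"
    by (rule map_pmf_eq_self_if_involution) (auto simp: inv sym)
  then have "measure_pmf.prob D (?A b) = measure_pmf.prob (map_pmf ?f D) (?A b)"
    by simp
  also have "\<dots> = measure_pmf.prob D (?f -` ?A b)"
    by (rule measure_map_pmf)
  also have "?f -` ?A b = ?A (\<not> b)"
    by (auto simp: Q_inv)
  finally have flip: "measure_pmf.prob D (?A b) = measure_pmf.prob D (?A (\<not> b))" .
  have "{w. Q (fst w)} = ?A b \<union> ?A (\<not> b)" and "?A b \<inter> ?A (\<not> b) = {}"
    by auto
  then have "measure_pmf.prob D {w. Q (fst w)} = measure_pmf.prob D (?A b) + measure_pmf.prob D (?A (\<not> b))"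
    by (simp add: measure_pmf.finite_measure_Union)
  with flip show ?thesis by linarith
qed

lemma indep_label_if_flip_symmetric:
  fixes D :: "('x \<times> bool) pmf"
  assumes inv: "\<And>x. \<sigma> (\<sigma> x) = x"
    and sym: "\<And>x y. pmf D (\<sigma> x, \<not> y) = pmf D (x, y)"
    and R_inv: "\<And>x. R (\<sigma> x) = R x"
  shows "indep_pmf D snd (\<lambda>(x, y). R x)"
  unfolding indep_pmf_def
proof (intro allI)
  fix b a
  have label: "measure_pmf.prob D {w. snd w = b} = 1/2"
    using prob_label_half_if_flip_symmetric[OF inv sym, of "\<lambda>_. True" b] by simp
  have "measure_pmf.prob D {w. snd w = b \<and> (case w of (x, y) \<Rightarrow> R x) = a}
      = measure_pmf.prob D {w. R (fst w) = a} / 2"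
    using prob_label_half_if_flip_symmetric[OF inv sym, of "\<lambda>x. R x = a" b] R_inv
    by (simp add: case_prod_beta)
  then show "measure_pmf.prob D {w. snd w = b \<and> (case w of (x, y) \<Rightarrow> R x) = a}
      = measure_pmf.prob D {w. snd w = b} * measure_pmf.prob D {w. (case w of (x, y) \<Rightarrow> R x) = a}"
    unfolding label by (simp add: case_prod_beta)
qed

lemma cond_prob_label_given_statistic:
  fixes D :: "('x::finite \<times> 'y::finite) pmf" and V :: "'x \<Rightarrow> 'v"
  assumes pmf_D: "\<And>x y. pmf D (x, y) = pmf X x * pmf (K (g x)) y"
    and factors: "\<And>x'. V x' = V x \<Longrightarrow> g x' = g x"
    and "pmf X x \<noteq> 0"
  shows "cond_prob D snd b (\<lambda>(x, y). V x) (V x) = pmf (K (g x)) b"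
proof -
  let ?S = "{x'. V x' = V x}"
  have "{w. snd w = b \<and> (case w of (x', y) \<Rightarrow> V x') = V x} = (\<lambda>x'. (x', b)) ` ?S"
    by auto
  then have "measure_pmf.prob D {w. snd w = b \<and> (case w of (x', y) \<Rightarrow> V x') = V x}
      = (\<Sum>x'\<in>?S. pmf D (x', b))"
    by (simp add: measure_measure_pmf_finite sum.reindex inj_on_def)
  also have "\<dots> = (\<Sum>x'\<in>?S. pmf X x') * pmf (K (g x)) b"
    unfolding sum_distrib_right by (intro sum.cong refl) (auto simp: pmf_D dest: factors)
  finally have joint: "measure_pmf.prob D {w. snd w = b \<and> (case w of (x', y) \<Rightarrow> V x') = V x}
      = measure_pmf.prob X ?S * pmf (K (g x)) b"
    by (simp add: measure_measure_pmf_finite)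
  have "{w. (case w of (x', y) \<Rightarrow> V x') = V x} = ?S \<times> UNIV"
    by (auto simp: case_prod_beta)
  then have "measure_pmf.prob D {w. (case w of (x', y) \<Rightarrow> V x') = V x}
      = measure_pmf.prob D (?S \<times> UNIV)"
    by (rule arg_cong)
  also have "\<dots> = (\<Sum>x'\<in>?S. \<Sum>y\<in>UNIV. pmf D (x', y))"
    by (simp add: measure_measure_pmf_finite sum.cartesian_product)
  also have "\<dots> = (\<Sum>x'\<in>?S. pmf X x' * (\<Sum>y\<in>UNIV. pmf (K (g x')) y))"
    by (simp add: pmf_D sum_distrib_left)
  finally have marginal: "measure_pmf.prob D {w. (case w of (x', y) \<Rightarrow> V x') = V x}
      = measure_pmf.prob X ?S"
    by (simp add: sum_pmf_eq_1 measure_measure_pmf_finite)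
  have "0 < pmf X x"
    using \<open>pmf X x \<noteq> 0\<close> by (simp add: order_less_le)
  also have "pmf X x \<le> measure_pmf.prob X ?S"
    unfolding measure_pmf_single [symmetric] by (rule measure_pmf.finite_measure_mono) auto
  finally show ?thesis
    unfolding cond_prob_def joint marginal by simp
qed

definition uniform_bvec :: "bvec pmf" where
  "uniform_bvec = pair_pmf (bernoulli_pmf (1/2)) (pair_pmf (bernoulli_pmf (1/2)) (bernoulli_pmf (1/2)))"

definition signal :: "bvec \<Rightarrow> bool" where
  "signal x = (case x of (x1, x2, x3) \<Rightarrow> if x3 then x1 else x2)"

definition noisy_copy :: "bool \<Rightarrow> bool pmf" where
  "noisy_copy t = map_pmf (\<lambda>keep. if keep then t else \<not> t) (bernoulli_pmf (9/10))"

definition flip_signal :: "bvec \<Rightarrow> bvec" where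
  "flip_signal x = (case x of (x1, x2, x3) \<Rightarrow> if x3 then (\<not> x1, x2, x3) else (x1, \<not> x2, x3))"

lemma pmf_uniform_bvec: "pmf uniform_bvec x = 1/8"
  by (cases x) (auto simp: uniform_bvec_def pmf_pair)

lemma pmf_noisy_copy: "pmf (noisy_copy t) y = (if y = t then 9/10 else 1/10)"
proof -
  have "pmf (noisy_copy t) y = pmf (noisy_copy t) (if y = t then t else \<not> t)"
    by simp
  also have "\<dots> = pmf (bernoulli_pmf (9/10)) (y = t)"
    unfolding noisy_copy_def by (rule pmf_map_inj') (auto simp: inj_def)
  finally show ?thesis by simp
qed

lemma ydist_eq_noisy_copy: "ydist x = noisy_copy (signal x)"
  by (simp add: ydist_def noisy_copy_def signal_def split: prod.splits)

lemma data_eq_bind_map_Pair: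
  "data = uniform_bvec \<bind> (\<lambda>x. map_pmf (Pair x) (noisy_copy (signal x)))"
  by (simp add: data_def uniform_bvec_def ydist_eq_noisy_copy map_pmf_def)

lemma pmf_data: "pmf data (x, y) = pmf uniform_bvec x * pmf (noisy_copy (signal x)) y"
  by (simp add: data_eq_bind_map_Pair pmf_bind_map_Pair)

lemma flip_signal_flip_signal: "flip_signal (flip_signal x) = x"
  by (cases x) (simp add: flip_signal_def)

lemma signal_flip_signal: "signal (flip_signal x) = (\<not> signal x)"
  by (cases x) (simp add: flip_signal_def signal_def)

lemma pmf_data_flip_signal: "pmf data (flip_signal x, \<not> y) = pmf data (x, y)"
  by (simp add: pmf_data pmf_uniform_bvec pmf_noisy_copy signal_flip_signal)

lemma removed_e_encode_flip_signal: "removed e_encode (flip_signal x) = removed e_encode x"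
  by (cases x) (simp add: removed_def e_encode_def flip_signal_def mask_compl_def selected_def vlist_def)

lemma val_expl_e_encode: "val_expl e_encode x = [Some (signal x), None, None]"
  by (cases x) (simp add: val_expl_def e_encode_def signal_def selected_def vlist_def numeral_2_eq_2)

theorem proposition1:
  shows "roar_optimal data e_encode \<and> fresh_optimal data e_encode"
proof
  show "roar_optimal data e_encode"
    unfolding roar_optimal_def
    by (rule indep_label_if_flip_symmetric [where \<sigma> = flip_signal])
      (simp_all add: flip_signal_flip_signal pmf_data_flip_signal removed_e_encode_flip_signal)
  have "cond_prob data snd b (\<lambda>(x, y). val_expl e_encode x) (val_expl e_encode x)
      = pmf (noisy_copy (signal x)) b" for x b
    by (rule cond_prob_label_given_statistic [where K = noisy_copy and g = signal, OF pmf_data])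
      (simp_all add: val_expl_e_encode pmf_uniform_bvec)
  moreover have "cond_prob data snd b fst x = pmf (noisy_copy (signal x)) b" for x b
    using cond_prob_label_given_statistic [where K = noisy_copy and g = signal, OF pmf_data, of id x]
    by (simp add: pmf_uniform_bvec case_prod_unfold)
  ultimately show "fresh_optimal data e_encode"
    by (simp add: fresh_optimal_def)
qed

end
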